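(* Let $p\in(1,5)$ and $\lambda>0$. Then $\mathrm{i}\lambda$ is an eigenvalue of $\mathcal{L}=\partial_xL_+$ if and only if $\mathrm{i}\lambda$ is an eigenvalue of $L_+\partial_x$, where $L_+=-\partial_x^2+1-p\,\phi^{p-1}$.
   Context: $\phi(x)=\left(\frac{p+1}{2}\right)^{\frac1{p-1}}\mathrm{sech}^{\frac2{p-1}}\left(\frac{p-1}2x\right)$. Both operators are third-order differential operators acting in $L^2(\mathbb{R})$ with domain $H^3(\mathbb{R})$; an eigenvalue means there is a nonzero eigenfunction in $H^3(\mathbb{R})$. *)

theory Defs
  imports "HOL-Analysis.Analysis"
begin

definition phi :: "real \<Rightarrow> real \<Rightarrow> real" where
  "phi p x = ((p + 1) / 2) powr (1 / (p - 1)) * (1 / cosh ((p - 1) / 2 * x)) powr (2 / (p - 1))"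

definition V :: "real \<Rightarrow> real \<Rightarrow> real" where
  "V p x = phi p x powr (p - 1)"

definition V' :: "real \<Rightarrow> real \<Rightarrow> real" where
  "V' p x = deriv (V p) x"

definition square_integrable :: "(real \<Rightarrow> complex) \<Rightarrow> bool" where
  "square_integrable f \<longleftrightarrow> f \<in> borel_measurable lborel \<and> integrable lborel (\<lambda>x. (cmod (f x))\<^sup>2)"

text \<open>u is (the continuous representative of) an element of H^3(R), with derivatives
  u1 = u', u2 = u'' (classical) and u3 = u''' (weak: u2 is the indefinite integral of u3),
  all of them in L^2(R).\<close>
definition H3_with_derivs ::
  "(real \<Rightarrow> complex) \<Rightarrow> (real \<Rightarrow> complex) \<Rightarrow> (real \<Rightarrow> complex) \<Rightarrow> (real \<Rightarrow> complex) \<Rightarrow> bool" where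
  "H3_with_derivs u u1 u2 u3 \<longleftrightarrow>
     (\<forall>x. (u has_vector_derivative u1 x) (at x)) \<and>
     (\<forall>x. (u1 has_vector_derivative u2 x) (at x)) \<and>
     (\<forall>a b. a \<le> b \<longrightarrow> (u3 has_integral (u2 b - u2 a)) {a..b}) \<and>
     square_integrable u \<and> square_integrable u1 \<and> square_integrable u2 \<and> square_integrable u3"

text \<open>mu is an eigenvalue of  dx L_+  (domain H^3), where L_+ = -dx^2 + 1 - p phi^(p-1):
  dx L_+ u = -u''' + u' - p (phi^(p-1))' u - p phi^(p-1) u', equality in L^2 (i.e. a.e.).\<close>
definition eigenvalue_dx_Lplus :: "real \<Rightarrow> complex \<Rightarrow> bool" where
  "eigenvalue_dx_Lplus p \<mu> \<longleftrightarrow>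
     (\<exists>u u1 u2 u3. H3_with_derivs u u1 u2 u3 \<and> u \<noteq> (\<lambda>x. 0) \<and>
        (AE x in lborel.
           - u3 x + u1 x - of_real p * (of_real (V' p x) * u x + of_real (V p x) * u1 x) = \<mu> * u x))"

text \<open>mu is an eigenvalue of  L_+ dx  (domain H^3):
  L_+ dx u = -u''' + u' - p phi^(p-1) u', equality in L^2 (i.e. a.e.).\<close>
definition eigenvalue_Lplus_dx :: "real \<Rightarrow> complex \<Rightarrow> bool" where
  "eigenvalue_Lplus_dx p \<mu> \<longleftrightarrow>
     (\<exists>u u1 u2 u3. H3_with_derivs u u1 u2 u3 \<and> u \<noteq> (\<lambda>x. 0) \<and>
        (AE x in lborel.
           - u3 x + u1 x - of_real p * of_real (V p x) * u1 x = \<mu> * u x))"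

end

theory Submission
  imports Defs
begin

text \<open>If \<open>\<partial>\<^sub>x L\<^sub>+ u = \<mu> u\<close>, then \<open>v = L\<^sub>+ u\<close> satisfies \<open>v' = \<mu> u\<close>, hence
  \<open>L\<^sub>+ \<partial>\<^sub>x v = \<mu> L\<^sub>+ u = \<mu> v\<close>, and \<open>v \<noteq> 0\<close> because \<open>\<mu> \<noteq> 0\<close>. Conversely, if
  \<open>L\<^sub>+ \<partial>\<^sub>x v = \<mu> v\<close>, then \<open>u = v'\<close> satisfies \<open>\<partial>\<^sub>x L\<^sub>+ u = \<mu> v' = \<mu> u\<close>, and \<open>u \<noteq> 0\<close>
  because a nonzero function in \<open>L\<^sup>2\<close> is not constant. The regularity bookkeeping rests on
  \<open>\<phi>\<^sup>p\<^sup>-\<^sup>1\<close> being a multiple of \<open>sech\<^sup>2\<close>, so that it and its derivative are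
  bounded and continuous, and on the weak third derivative agreeing a.e. with a continuous
  function, which makes it classical.\<close>

lemma V_eq_sech_square:
  assumes "1 < p"
  shows "V p x = (p + 1) / 2 * (1 / cosh ((p - 1) / 2 * x))\<^sup>2"
proof -
  have sech_pos: "1 / cosh ((p - 1) / 2 * x) > 0" by simp
  have "(((p + 1) / 2) powr (1 / (p - 1))) powr (p - 1) = (p + 1) / 2"
    using assms by (simp add: powr_powr)
  moreover have "((1 / cosh ((p - 1) / 2 * x)) powr (2 / (p - 1))) powr (p - 1)
      = (1 / cosh ((p - 1) / 2 * x))\<^sup>2"
  proof -
    have "2 / (p - 1) * (p - 1) = 2" using assms by (simp add: divide_simps)
    then show ?thesis
      using sech_pos unfolding powr_powr by (simp only: powr_numeral)
  qed
  ultimately show ?thesis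
    using assms sech_pos unfolding V_def phi_def by (simp add: powr_mult)
qed

lemma V_has_real_derivative:
  assumes "1 < p"
  shows "(V p has_real_derivative
           - (p + 1) * ((p - 1) / 2) * sinh ((p - 1) / 2 * x) / cosh ((p - 1) / 2 * x) ^ 3) (at x)"
proof -
  have "V p = (\<lambda>x. (p + 1) / 2 * (1 / cosh ((p - 1) / 2 * x))\<^sup>2)"
    using V_eq_sech_square[OF assms] by auto
  moreover have "cosh ((p - 1) / 2 * x) \<noteq> 0"
    by (metis cosh_real_pos less_irrefl)
  ultimately show ?thesis
    by (auto intro!: derivative_eq_intros simp: field_simps power2_eq_square power3_eq_cube)
qed

lemma V'_eq:
  assumes "1 < p"
  shows "V' p x = - (p + 1) * ((p - 1) / 2) * sinh ((p - 1) / 2 * x) / cosh ((p - 1) / 2 * x) ^ 3"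
  unfolding V'_def using V_has_real_derivative[OF assms] by (rule DERIV_imp_deriv)

lemma V_has_real_derivative_V':
  assumes "1 < p"
  shows "(V p has_real_derivative V' p x) (at x)"
  using V_has_real_derivative[OF assms] V'_eq[OF assms] by simp

lemma continuous_on_V: "1 < p \<Longrightarrow> continuous_on UNIV (V p)"
  using V_has_real_derivative_V' by (meson DERIV_isCont continuous_at_imp_continuous_on)

lemma continuous_on_V':
  assumes "1 < p"
  shows "continuous_on UNIV (V' p)"
proof -
  have "cosh ((p - 1) / 2 * x) ^ 3 \<noteq> 0" for x
    by (metis cosh_real_pos less_irrefl power_eq_0_iff)
  then show ?thesis
    unfolding V'_eq[OF assms, abs_def] by (intro continuous_intros) auto
qed

lemma abs_V_le:
  assumes "1 < p"
  shows "\<bar>V p x\<bar> \<le> (p + 1) / 2"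
proof -
  have "0 < 1 / cosh ((p - 1) / 2 * x)" "1 / cosh ((p - 1) / 2 * x) \<le> 1"
    using cosh_real_ge_1[of "(p - 1) / 2 * x"] by auto
  then have "0 \<le> (1 / cosh ((p - 1) / 2 * x))\<^sup>2" "(1 / cosh ((p - 1) / 2 * x))\<^sup>2 \<le> 1"
    by (auto simp: power_le_one)
  then show ?thesis
    using assms unfolding V_eq_sech_square[OF assms] by (simp add: abs_mult mult_left_le)
qed

lemma abs_V'_le:
  assumes "1 < p"
  shows "\<bar>V' p x\<bar> \<le> (p + 1) * ((p - 1) / 2)"
proof -
  define c where "c = cosh ((p - 1) / 2 * x)"
  define s where "s = sinh ((p - 1) / 2 * x)"
  have c_ge_1: "1 \<le> c" unfolding c_def by (rule cosh_real_ge_1)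
  have "\<bar>s\<bar>\<^sup>2 \<le> c\<^sup>2" unfolding s_def c_def by (simp add: sinh_square_eq)
  then have "\<bar>s\<bar> \<le> c" using c_ge_1 by (auto intro: power2_le_imp_le)
  also have "c \<le> c ^ 3"
    using c_ge_1 by (simp add: power_increasing[of 1 3 c, simplified])
  finally have ratio_le_1: "\<bar>s\<bar> / c ^ 3 \<le> 1" using c_ge_1 by simp
  have "\<bar>V' p x\<bar> = (p + 1) * ((p - 1) / 2) * (\<bar>s\<bar> / c ^ 3)"
    unfolding V'_eq[OF assms] s_def[symmetric] c_def[symmetric]
    using assms c_ge_1 by (simp add: abs_mult abs_divide)
  then show ?thesis
    using mult_left_le[OF ratio_le_1, of "(p + 1) * ((p - 1) / 2)"] assms by simp
qed

lemma square_integrable_add: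
  assumes "square_integrable f" "square_integrable g"
  shows "square_integrable (\<lambda>x. f x + g x)"
  unfolding square_integrable_def
proof
  show meas: "(\<lambda>x. f x + g x) \<in> borel_measurable lborel"
    using assms by (auto simp: square_integrable_def)
  have "integrable lborel (\<lambda>x. 2 * (cmod (f x))\<^sup>2 + 2 * (cmod (g x))\<^sup>2)"
    using assms by (auto simp: square_integrable_def)
  then show "integrable lborel (\<lambda>x. (cmod (f x + g x))\<^sup>2)"
  proof (rule Bochner_Integration.integrable_bound)
    show "(\<lambda>x. (cmod (f x + g x))\<^sup>2) \<in> borel_measurable lborel"
      using meas by measurable
    have "(cmod (f x + g x))\<^sup>2 \<le> 2 * (cmod (f x))\<^sup>2 + 2 * (cmod (g x))\<^sup>2" for x
    proof -
      have "(cmod (f x + g x))\<^sup>2 \<le> (cmod (f x) + cmod (g x))\<^sup>2"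
        by (simp add: power_mono norm_triangle_ineq)
      also have "\<dots> \<le> 2 * (cmod (f x))\<^sup>2 + 2 * (cmod (g x))\<^sup>2"
        using zero_le_power2[of "cmod (f x) - cmod (g x)"]
        unfolding power2_sum power2_diff by linarith
      finally show ?thesis .
    qed
    then show "AE x in lborel. norm ((cmod (f x + g x))\<^sup>2)
        \<le> norm (2 * (cmod (f x))\<^sup>2 + 2 * (cmod (g x))\<^sup>2)"
      by simp
  qed
qed

lemma square_integrable_cmult:
  "square_integrable f \<Longrightarrow> square_integrable (\<lambda>x. c * f x)"
  unfolding square_integrable_def by (auto simp: norm_mult power_mult_distrib)

lemma square_integrable_uminus:
  "square_integrable f \<Longrightarrow> square_integrable (\<lambda>x. - f x)"
  unfolding square_integrable_def by auto

lemma square_integrable_diff: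
  "square_integrable f \<Longrightarrow> square_integrable g \<Longrightarrow> square_integrable (\<lambda>x. f x - g x)"
  using square_integrable_add[of f "\<lambda>x. - g x"] square_integrable_uminus[of g] by simp

lemma square_integrable_mult_bounded:
  assumes f: "square_integrable f"
    and h_meas: "h \<in> borel_measurable lborel" and h_bound: "\<And>x. \<bar>h x\<bar> \<le> B"
  shows "square_integrable (\<lambda>x. of_real (h x) * f x)"
  unfolding square_integrable_def
proof
  show meas: "(\<lambda>x. of_real (h x) * f x) \<in> borel_measurable lborel"
    using f h_meas by (auto simp: square_integrable_def)
  have "integrable lborel (\<lambda>x. B\<^sup>2 * (cmod (f x))\<^sup>2)"
    using f by (auto simp: square_integrable_def)
  then show "integrable lborel (\<lambda>x. (cmod (of_real (h x) * f x))\<^sup>2)"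
  proof (rule Bochner_Integration.integrable_bound)
    show "(\<lambda>x. (cmod (of_real (h x) * f x))\<^sup>2) \<in> borel_measurable lborel"
      using meas by measurable
    have "\<bar>h x\<bar>\<^sup>2 \<le> B\<^sup>2" for x
      using power_mono[OF h_bound[of x] abs_ge_zero] .
    then show "AE x in lborel. norm ((cmod (of_real (h x) * f x))\<^sup>2) \<le> norm (B\<^sup>2 * (cmod (f x))\<^sup>2)"
      by (simp add: norm_mult power_mult_distrib mult_right_mono)
  qed
qed

lemma square_integrable_const_zero:
  assumes "square_integrable (\<lambda>x. c)"
  shows "c = 0"
proof (rule ccontr)
  assume "c \<noteq> 0"
  then have "(\<integral>\<^sup>+ x. ennreal (norm ((cmod c)\<^sup>2)) \<partial>lborel) = \<infinity>"
    by (simp add: nn_integral_const ennreal_mult_top)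
  moreover have "(\<integral>\<^sup>+ x. ennreal (norm ((cmod c)\<^sup>2)) \<partial>lborel) < \<infinity>"
    using assms unfolding square_integrable_def by (simp add: integrable_iff_bounded)
  ultimately show False by simp
qed

lemma square_integrable_V_mult:
  assumes "1 < p" "square_integrable f"
  shows "square_integrable (\<lambda>x. of_real (V p x) * f x)"
  using continuous_on_V[OF assms(1)]
  by (intro square_integrable_mult_bounded[OF assms(2) _ abs_V_le[OF assms(1)]])
     (auto intro: borel_measurable_continuous_onI)

lemma square_integrable_V'_mult:
  assumes "1 < p" "square_integrable f"
  shows "square_integrable (\<lambda>x. of_real (V' p x) * f x)"
  using continuous_on_V'[OF assms(1)]
  by (intro square_integrable_mult_bounded[OF assms(2) _ abs_V'_le[OF assms(1)]])
     (auto intro: borel_measurable_continuous_onI)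

lemma has_integral_of_vector_derivative_UNIV:
  fixes F f :: "real \<Rightarrow> 'a::banach"
  assumes "\<And>x. (F has_vector_derivative f x) (at x)" "a \<le> b"
  shows "(f has_integral (F b - F a)) {a..b}"
  using assms by (intro fundamental_theorem_of_calculus) (auto intro: has_vector_derivative_at_within)

lemma has_vector_derivative_if_integrals_ae_continuous:
  fixes F g f :: "real \<Rightarrow> 'a::banach"
  assumes integrals: "\<And>a b. a \<le> b \<Longrightarrow> (g has_integral (F b - F a)) {a..b}"
    and ae: "AE x in lborel. g x = f x" and f_cont: "continuous_on UNIV f"
  shows "(F has_vector_derivative f x) (at x)"
proof -
  obtain N where N: "negligible N" "{x. g x \<noteq> f x} \<subseteq> N"
    using AE_completion[OF ae] unfolding eventually_ae_filter_negligible by blast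
  have f_integrals: "(f has_integral (F b - F a)) {a..b}" if "a \<le> b" for a b
    by (rule has_integral_spike[OF N(1) _ integrals[OF that]]) (use N(2) in force)
  have "((\<lambda>y. integral {x - 1..y} f) has_vector_derivative f x) (at x within {x - 1..x + 1})"
    by (rule integral_has_vector_derivative) (auto intro: continuous_on_subset[OF f_cont])
  moreover have "at x within {x - 1..x + 1} = at x"
    by (rule at_within_interior) auto
  ultimately have "((\<lambda>y. F (x - 1) + integral {x - 1..y} f) has_vector_derivative f x) (at x)"
    by (auto intro!: derivative_eq_intros)
  then show ?thesis
  proof (rule has_vector_derivative_transform_within_open[of _ _ _ "{x - 1<..<x + 1}"])
    fix y assume "y \<in> {x - 1<..<x + 1}"
    then have "integral {x - 1..y} f = F y - F (x - 1)"
      by (intro integral_unique f_integrals) simp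
    then show "F (x - 1) + integral {x - 1..y} f = F y" by simp
  qed auto
qed

lemma H3_with_derivsI:
  assumes "\<And>x. (u has_vector_derivative u1 x) (at x)"
    and "\<And>x. (u1 has_vector_derivative u2 x) (at x)"
    and "\<And>x. (u2 has_vector_derivative u3 x) (at x)"
    and "square_integrable u" "square_integrable u1" "square_integrable u2" "square_integrable u3"
  shows "H3_with_derivs u u1 u2 u3"
  using assms has_integral_of_vector_derivative_UNIV[OF assms(3)]
  unfolding H3_with_derivs_def by blast

lemma V_mult_has_vector_derivative:
  fixes u :: "real \<Rightarrow> complex"
  assumes "1 < p" and "(u has_vector_derivative u1) (at x)"
  shows "((\<lambda>y. of_real (V p y) * u y) has_vector_derivative
          of_real (V' p x) * u x + of_real (V p x) * u1) (at x)"
  using bounded_bilinear.has_vector_derivative[OF bounded_bilinear_mult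
      has_vector_derivative_of_real[OF V_has_real_derivative_V'[OF assms(1)]] assms(2)]
  by (simp add: algebra_simps)

lemma eigenvalue_Lplus_dx_if_eigenvalue_dx_Lplus:
  assumes p: "1 < p" and "\<mu> \<noteq> 0" and "eigenvalue_dx_Lplus p \<mu>"
  shows "eigenvalue_Lplus_dx p \<mu>"
proof -
  obtain u u1 u2 u3 where H: "H3_with_derivs u u1 u2 u3" and "u \<noteq> (\<lambda>x. 0)"
    and eigen: "AE x in lborel.
      - u3 x + u1 x - of_real p * (of_real (V' p x) * u x + of_real (V p x) * u1 x) = \<mu> * u x"
    using assms(3) unfolding eigenvalue_dx_Lplus_def by blast
  from H have d1: "\<And>x. (u has_vector_derivative u1 x) (at x)"
    and d2: "\<And>x. (u1 has_vector_derivative u2 x) (at x)"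
    and d3: "\<And>a b. a \<le> b \<Longrightarrow> (u3 has_integral (u2 b - u2 a)) {a..b}"
    and L2: "square_integrable u" "square_integrable u1" "square_integrable u2"
    unfolding H3_with_derivs_def by auto
  define v where "v x = - u2 x + u x - of_real p * (of_real (V p x) * u x)" for x
  have v_weak_deriv: "((\<lambda>x. - u3 x + u1 x - of_real p * (of_real (V' p x) * u x + of_real (V p x) * u1 x))
      has_integral (v b - v a)) {a..b}" if "a \<le> b" for a b
  proof -
    have "((\<lambda>x. - u3 x + u1 x - of_real p * (of_real (V' p x) * u x + of_real (V p x) * u1 x))
        has_integral (- (u2 b - u2 a) + (u b - u a)
          - of_real p * (of_real (V p b) * u b - of_real (V p a) * u a))) {a..b}"
      by (intro has_integral_diff has_integral_add has_integral_neg has_integral_mult_right d3 that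
          has_integral_of_vector_derivative_UNIV[OF d1]
          has_integral_of_vector_derivative_UNIV[OF V_mult_has_vector_derivative[OF p d1]])
    then show ?thesis by (simp add: v_def algebra_simps)
  qed
  have v_deriv: "(v has_vector_derivative \<mu> * u x) (at x)" for x
    using continuous_on_vector_derivative[of UNIV u, OF d1]
    by (intro has_vector_derivative_if_integrals_ae_continuous[OF v_weak_deriv eigen])
       (auto intro: continuous_intros)
  show ?thesis unfolding eigenvalue_Lplus_dx_def
  proof (intro exI conjI)
    show "H3_with_derivs v (\<lambda>x. \<mu> * u x) (\<lambda>x. \<mu> * u1 x) (\<lambda>x. \<mu> * u2 x)"
      using v_deriv d1 d2 L2 p unfolding v_def
      by (intro H3_with_derivsI has_vector_derivative_mult_right square_integrable_cmult
          square_integrable_diff square_integrable_add square_integrable_uminus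
          square_integrable_V_mult) auto
    show "v \<noteq> (\<lambda>x. 0)"
    proof
      assume "v = (\<lambda>x. 0)"
      then have "((\<lambda>x. 0) has_vector_derivative \<mu> * u x) (at x)" for x
        using v_deriv[of x] by simp
      then have "\<mu> * u x = 0" for x
        using vector_derivative_unique_at has_vector_derivative_const by blast
      with \<open>\<mu> \<noteq> 0\<close> \<open>u \<noteq> (\<lambda>x. 0)\<close> show False by auto
    qed
    show "AE x in lborel. - (\<mu> * u2 x) + \<mu> * u x - of_real p * of_real (V p x) * (\<mu> * u x) = \<mu> * v x"
      by (simp add: v_def algebra_simps)
  qed
qed

lemma eigenvalue_dx_Lplus_if_eigenvalue_Lplus_dx:
  assumes p: "1 < p" and "eigenvalue_Lplus_dx p \<mu>"
  shows "eigenvalue_dx_Lplus p \<mu>"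
proof -
  obtain v v1 v2 v3 where H: "H3_with_derivs v v1 v2 v3" and "v \<noteq> (\<lambda>x. 0)"
    and eigen: "AE x in lborel. - v3 x + v1 x - of_real p * of_real (V p x) * v1 x = \<mu> * v x"
    using assms(2) unfolding eigenvalue_Lplus_dx_def by blast
  from H have d1: "\<And>x. (v has_vector_derivative v1 x) (at x)"
    and d2: "\<And>x. (v1 has_vector_derivative v2 x) (at x)"
    and d3: "\<And>a b. a \<le> b \<Longrightarrow> (v3 has_integral (v2 b - v2 a)) {a..b}"
    and L2: "square_integrable v" "square_integrable v1" "square_integrable v2"
    unfolding H3_with_derivs_def by auto
  define w where "w x = v1 x - of_real p * (of_real (V p x) * v1 x) - \<mu> * v x" for x
  define z where "z x = v2 x - of_real p * (of_real (V' p x) * v1 x + of_real (V p x) * v2 x)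
    - \<mu> * v1 x" for x
  have w_deriv: "(w has_vector_derivative z x) (at x)" for x
    unfolding w_def[abs_def] z_def
    by (intro has_vector_derivative_diff has_vector_derivative_mult_right
        V_mult_has_vector_derivative[OF p d2] d1 d2)
  have "AE x in lborel. v3 x = w x"
    using eigen by eventually_elim (simp add: w_def algebra_simps)
  then have v2_deriv: "(v2 has_vector_derivative w x) (at x)" for x
    using continuous_on_vector_derivative[of UNIV w, OF w_deriv]
    by (intro has_vector_derivative_if_integrals_ae_continuous[OF d3]) auto
  show ?thesis unfolding eigenvalue_dx_Lplus_def
  proof (intro exI conjI)
    show "H3_with_derivs v1 v2 w z"
      using d2 v2_deriv w_deriv L2 p unfolding w_def[abs_def] z_def[abs_def]
      by (intro H3_with_derivsI square_integrable_diff square_integrable_add square_integrable_cmult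
          square_integrable_V_mult square_integrable_V'_mult) auto
    show "v1 \<noteq> (\<lambda>x. 0)"
    proof
      assume "v1 = (\<lambda>x. 0)"
      then obtain c where "\<And>x. v x = c"
        using has_vector_derivative_zero_constant[of UNIV v] d1 by auto
      then have "v = (\<lambda>x. c)" by auto
      with L2(1) square_integrable_const_zero \<open>v \<noteq> (\<lambda>x. 0)\<close> show False by auto
    qed
    show "AE x in lborel. - z x + v2 x
        - of_real p * (of_real (V' p x) * v1 x + of_real (V p x) * v2 x) = \<mu> * v1 x"
      by (simp add: z_def algebra_simps)
  qed
qed

theorem mainTheorem5:
  fixes p lam :: real
  assumes "1 < p" and "p < 5" and "lam > 0"
  shows "eigenvalue_dx_Lplus p (\<i> * of_real lam) \<longleftrightarrow> eigenvalue_Lplus_dx p (\<i> * of_real lam)"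
  using eigenvalue_Lplus_dx_if_eigenvalue_dx_Lplus[OF assms(1)]
    eigenvalue_dx_Lplus_if_eigenvalue_Lplus_dx[OF assms(1)] assms(3)
  by auto

end
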